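(* Let $\mathbb{F}_{q^2}$ be a finite field of characteristic $p$ and let $n=p^\nu n'$ with $\nu\ge 0$ and $p\nmid n'$. Then the number of Hermitian complementary dual cyclic codes of length $n$ over $\mathbb{F}_{q^2}$ does not depend on $\nu$ and equals $2^{|\Omega_{q^2,n'}|+|\Lambda_{q^2,n'}|}$.
   Context: $\bar\alpha=\alpha^q$ for $\alpha\in\mathbb{F}_{q^2}$, and for $f(x)=\sum_i f_ix^i$, $\overline{f(x)}=\sum_i\bar f_ix^i$. For $f(x)$ with $f(0)\ne0$, $f^*(x)=x^{\deg f}f(0)^{-1}f(1/x)$ and $f^\dagger(x)=\overline{f^*(x)}$. A monic irreducible $f\in\mathbb{F}_{q^2}[x]$ with $f(0)\neq0$ is SCRIM if $f=f^\dagger$; otherwise $\{f,f^\dagger\}$ is a CRIM pair (two distinct monic irreducibles). $\Omega_{q^2,n'}$ is the set of SCRIM factors of $x^{n'}-1$ in $\mathbb{F}_{q^2}[x]$, and $\Lambda_{q^2,n'}$ is the set of unordered CRIM pairs $\{f,f^\dagger\}$ of monic irreducible factors of $x^{n'}-1$ in $\mathbb{F}_{q^2}[x]$. A cyclic code of length $n$ over $\mathbb{F}_{q^2}$ is a subspace of $\mathbb{F}_{q^2}^n$ invariant under cyclic shift. With Hermitian inner product $\langle \mathbf u,\mathbf v\rangle_{\mathrm H}=\sum_i u_i\bar v_i$ and $C^{\perp_{\mathrm H}}$ the corresponding dual, $C$ is Hermitian complementary dual if $C\cap C^{\perp_{\mathrm H}}=\{0\}$. *)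

theory Defs
  imports "HOL-Computational_Algebra.Polynomial" "HOL-Computational_Algebra.Primes"
begin

definition conjq :: "nat \<Rightarrow> 'a::field \<Rightarrow> 'a" where
  "conjq q a = a ^ q"

definition conj_poly :: "nat \<Rightarrow> 'a::field poly \<Rightarrow> 'a poly" where
  "conj_poly q f = map_poly (conjq q) f"

definition recip_poly :: "'a::field poly \<Rightarrow> 'a poly" where
  "recip_poly f = smult (inverse (coeff f 0)) (reflect_poly f)"

definition dagger_poly :: "nat \<Rightarrow> 'a::field poly \<Rightarrow> 'a poly" where
  "dagger_poly q f = conj_poly q (recip_poly f)"

definition mon_irr_factor :: "nat \<Rightarrow> 'a::field poly \<Rightarrow> bool" where
  "mon_irr_factor n f \<longleftrightarrow> lead_coeff f = 1 \<and> irreducible f \<and> coeff f 0 \<noteq> 0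
      \<and> f dvd (monom 1 n - 1)"

definition Omega :: "nat \<Rightarrow> nat \<Rightarrow> 'a::field poly set" where
  "Omega q n = {f. mon_irr_factor n f \<and> f = dagger_poly q f}"

definition Lambda :: "nat \<Rightarrow> nat \<Rightarrow> 'a::field poly set set" where
  "Lambda q n = {{f, dagger_poly q f} | f. mon_irr_factor n f \<and> mon_irr_factor n (dagger_poly q f)
                   \<and> f \<noteq> dagger_poly q f}"

(* Vectors of F^n are lists of length n *)
definition cyc_shift :: "'a list \<Rightarrow> 'a list" where
  "cyc_shift v = (if v = [] then [] else last v # butlast v)"

definition is_linear_code :: "nat \<Rightarrow> 'a::field list set \<Rightarrow> bool" where
  "is_linear_code n C \<longleftrightarrow> C \<subseteq> {v. length v = n} \<and> replicate n 0 \<in> C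
     \<and> (\<forall>u\<in>C. \<forall>v\<in>C. map2 (+) u v \<in> C) \<and> (\<forall>a. \<forall>u\<in>C. map ((*) a) u \<in> C)"

definition is_cyclic_code :: "nat \<Rightarrow> 'a::field list set \<Rightarrow> bool" where
  "is_cyclic_code n C \<longleftrightarrow> is_linear_code n C \<and> (\<forall>u\<in>C. cyc_shift u \<in> C)"

definition herm_ip :: "nat \<Rightarrow> 'a::field list \<Rightarrow> 'a list \<Rightarrow> 'a" where
  "herm_ip q u v = (\<Sum>i<length u. u ! i * conjq q (v ! i))"

definition herm_dual :: "nat \<Rightarrow> nat \<Rightarrow> 'a::field list set \<Rightarrow> 'a list set" where
  "herm_dual q n C = {v. length v = n \<and> (\<forall>u\<in>C. herm_ip q u v = 0)}"

definition is_HCD :: "nat \<Rightarrow> nat \<Rightarrow> 'a::field list set \<Rightarrow> bool" where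
  "is_HCD q n C \<longleftrightarrow> C \<inter> herm_dual q n C = {replicate n 0}"

end

theory Submission
  imports Defs
begin

interpretation field_poly: normalization_euclidean_semiring
  where zero = "0 :: 'a :: field poly" and one = 1 and plus = plus and minus = minus
    and times = times and divide = divide and modulo = modulo
    and normalize = "\<lambda>p. smult (inverse (lead_coeff p)) p"
    and unit_factor = "\<lambda>p. [:lead_coeff p:]"
    and euclidean_size = "\<lambda>p. if p = 0 then 0 else Suc (degree p)"
  rewrites "dvd.dvd ((*) :: 'a poly \<Rightarrow> _) = (dvd)"
    and "comm_monoid_mult.prod_mset ((*) :: 'a poly \<Rightarrow> _) 1 = prod_mset"
    and "comm_semiring_1.irreducible ((*) :: 'a poly \<Rightarrow> _) 1 0 = irreducible"
    and "comm_semiring_1.prime_elem ((*) :: 'a poly \<Rightarrow> _) 1 0 = prime_elem"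
proof -
  show "dvd.dvd ((*) :: 'a poly \<Rightarrow> _) = (dvd)"
    by (simp add: dvd_dict)
  show "comm_monoid_mult.prod_mset ((*) :: 'a poly \<Rightarrow> _) 1 = prod_mset"
    by (simp add: prod_mset_dict)
  show "comm_semiring_1.irreducible ((*) :: 'a poly \<Rightarrow> _) 1 0 = irreducible"
    by (simp add: irreducible_dict)
  show "comm_semiring_1.prime_elem ((*) :: 'a poly \<Rightarrow> _) 1 0 = prime_elem"
    by (simp add: prime_elem_dict)
  show "class.normalization_euclidean_semiring divide plus minus (0 :: 'a poly) times 1 modulo
    (\<lambda>p. if p = 0 then 0 else Suc (degree p)) (\<lambda>p. [:lead_coeff p:])
    (\<lambda>p. smult (inverse (lead_coeff p)) p)"
  proof (standard, fold dvd_dict)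
    fix a b :: "'a poly"
    show "[:lead_coeff a:] * smult (inverse (lead_coeff a)) a = a"
      by (cases "a = 0") simp_all
    show "is_unit a \<Longrightarrow> [:lead_coeff a:] = a"
      by (elim is_unit_polyE) (simp add: monom_0)
    show "a \<noteq> 0 \<Longrightarrow> is_unit [:lead_coeff a:]"
      by (simp add: is_unit_pCons_iff)
    show "is_unit a \<Longrightarrow> [:lead_coeff (a * b):] = a * [:lead_coeff b:]"
      by (elim is_unit_polyE) (simp add: monom_0)
  qed (auto simp: lead_coeff_mult degree_mod_less' degree_mult_right_le)
qed

lemma field_poly_prime_iff:
  "field_poly.prime (p :: 'a :: field poly) \<longleftrightarrow> irreducible p \<and> lead_coeff p = 1"
proof
  assume p: "field_poly.prime p"
  then have "p \<noteq> 0" "smult (inverse (lead_coeff p)) p = p"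
    by (auto simp: field_poly.prime_def)
  then have "lead_coeff p = 1"
    by (metis coeff_smult field_class.field_inverse leading_coeff_0_iff)
  with p show "irreducible p \<and> lead_coeff p = 1"
    by (simp add: field_poly.prime_def prime_elem_imp_irreducible)
qed (simp add: field_poly.prime_def field_poly.irreducible_imp_prime_elem)

lemma field_poly_prime_nonunit:
  "field_poly.prime (p :: 'a :: field poly) \<Longrightarrow> p \<noteq> 0 \<and> \<not> is_unit p"
  by (simp add: field_poly.prime_def prime_elem_def)

lemma field_poly_power_eq: "power.power (1 :: 'a :: field poly) (*) = (^)"
proof (intro ext)
  show "power.power 1 (*) p k = p ^ k" for p :: "'a poly" and k
    by (induction k) (simp_all add: power.power.simps)
qed

lemma field_poly_prod_eq: "comm_monoid_mult.prod ((*) :: 'a :: field poly \<Rightarrow> _) 1 = prod"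
  by (simp add: prod_dict)

lemmas field_poly_multiplicity_power_distrib =
  field_poly.prime_elem_multiplicity_power_distrib[unfolded field_poly_power_eq]

abbreviation xn_minus_1 :: "nat \<Rightarrow> 'a :: field poly" where
  "xn_minus_1 n \<equiv> monom 1 n - 1"

lemma degree_xn_minus_1: "n > 0 \<Longrightarrow> degree (xn_minus_1 n :: 'a :: field poly) = n"
  using degree_add_eq_left[of "-1" "monom 1 n :: 'a poly"] by (simp add: degree_monom_eq)

lemma lead_coeff_xn_minus_1: "n > 0 \<Longrightarrow> lead_coeff (xn_minus_1 n :: 'a :: field poly) = 1"
  by (simp add: degree_xn_minus_1)

lemma xn_minus_1_nonzero:
  assumes "n > 0"
  shows "xn_minus_1 n \<noteq> (0 :: 'a :: field poly)"
proof
  assume "xn_minus_1 n = (0 :: 'a poly)"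
  then show False
    using degree_xn_minus_1[OF assms, where ?'a = 'a] assms by simp
qed

lemma coeff_0_of_dvd_xn_minus_1:
  assumes "n > 0" "f dvd (xn_minus_1 n :: 'a :: field poly)"
  shows "coeff f 0 \<noteq> 0"
proof
  assume "coeff f 0 = 0"
  moreover obtain k where "xn_minus_1 n = f * k"
    using assms(2) by (elim dvdE)
  then have "coeff (xn_minus_1 n :: 'a poly) 0 = coeff f 0 * coeff k 0"
    by (simp add: coeff_mult)
  ultimately show False
    using assms(1) by (simp add: coeff_monom)
qed

definition coeff_vec :: "nat \<Rightarrow> 'a :: zero poly \<Rightarrow> 'a list" where
  "coeff_vec n w = map (coeff w) [0..<n]"

lemma length_coeff_vec [simp]: "length (coeff_vec n w) = n"
  by (simp add: coeff_vec_def)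

lemma Poly_coeff_vec: "degree w < n \<Longrightarrow> Poly (coeff_vec n w) = w"
  by (intro poly_eqI) (auto simp: coeff_vec_def nth_default_def coeff_eq_0)

lemma coeff_vec_Poly: "length v = n \<Longrightarrow> coeff_vec n (Poly v) = v"
  by (intro nth_equalityI) (auto simp: coeff_vec_def nth_default_def)

lemma Poly_eq_iff_same_length: "length u = length v \<Longrightarrow> Poly u = Poly v \<longleftrightarrow> u = v"
  by (metis coeff_vec_Poly)

lemma degree_Poly_less:
  assumes "length v = n" "n > 0"
  shows "degree (Poly v) < n"
proof -
  have "degree (Poly v) \<le> n - 1"
    by (rule degree_le) (use assms(1) in \<open>auto simp: nth_default_def\<close>)
  with assms(2) show ?thesis
    by linarith
qed

lemma Poly_map2_plus: "length u = length v \<Longrightarrow> Poly (map2 (+) u v) = Poly u + Poly v"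
  by (induction u v rule: list_induct2) auto

lemma Poly_map_mult: "Poly (map ((*) a) u) = smult a (Poly u)"
  by (induction u) auto

lemma Poly_cyc_shift:
  assumes "length v = n" "n > 0"
  shows "Poly (cyc_shift v) = ([:0, 1:] * Poly v) mod (xn_minus_1 n :: 'a :: field poly)"
proof -
  obtain u l where v: "v = u @ [l]"
    using assms by (metis length_greater_0_conv rev_exhaust)
  have "length u = n - 1"
    using assms(1) v by simp
  then have "Poly v = Poly u + monom l (n - 1)"
    by (simp add: v Poly_append monom_altdef)
  moreover have "Poly (cyc_shift v) = [:l:] + [:0, 1:] * Poly u"
    by (simp add: v cyc_shift_def)
  moreover have "[:0, 1:] * monom l (n - 1) = monom l n"
    using assms(2) by (cases n) (simp_all add: monom_Suc)
  ultimately have "[:0, 1:] * Poly v = Poly (cyc_shift v) + smult l (xn_minus_1 n)"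
    by (simp add: distrib_left smult_diff_right smult_monom)
  moreover have "degree (Poly (cyc_shift v)) < n"
    using assms by (intro degree_Poly_less) (auto simp: cyc_shift_def)
  ultimately show ?thesis
    using assms(2) by (simp add: poly_mod_add_left mod_poly_less degree_xn_minus_1 mod_eq_0_iff_dvd dvd_smult)
qed

definition generated_code :: "nat \<Rightarrow> 'a :: field poly \<Rightarrow> 'a list set" where
  "generated_code n g = {v. length v = n \<and> g dvd Poly v}"

lemma cyclic_generated_code:
  assumes "n > 0" "g dvd xn_minus_1 n"
  shows "is_cyclic_code n (generated_code n g)"
  unfolding is_cyclic_code_def is_linear_code_def
proof (intro conjI ballI allI)
  fix u assume "u \<in> generated_code n g"
  then have u: "length u = n" "g dvd Poly u"
    by (auto simp: generated_code_def)
  have "g dvd ([:0, 1:] * Poly u) mod xn_minus_1 n"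
    using dvd_mod[OF dvd_mult[OF u(2)] assms(2)] .
  moreover have "length (cyc_shift u) = n"
    using u(1) by (auto simp: cyc_shift_def)
  ultimately show "cyc_shift u \<in> generated_code n g"
    using Poly_cyc_shift[OF u(1) assms(1)] by (simp add: generated_code_def)
qed (auto simp: generated_code_def Poly_map2_plus Poly_map_mult dvd_smult)

lemma poly_ideal_principal:
  fixes J :: "'a :: field poly set"
  assumes add: "\<And>a b. a \<in> J \<Longrightarrow> b \<in> J \<Longrightarrow> a + b \<in> J"
    and mult: "\<And>a c. a \<in> J \<Longrightarrow> c * a \<in> J"
    and nonzero: "x \<in> J" "x \<noteq> 0"
  obtains g where "lead_coeff g = 1" "J = {w. g dvd w}"
proof -
  obtain g0 where g0: "g0 \<in> J" "g0 \<noteq> 0"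
    and min: "\<And>w. w \<in> J \<Longrightarrow> w \<noteq> 0 \<Longrightarrow> degree g0 \<le> degree w"
    using ex_has_least_nat[of "\<lambda>w. w \<in> J \<and> w \<noteq> 0" x degree] nonzero by blast
  define g where "g = smult (inverse (lead_coeff g0)) g0"
  have g: "g \<in> J" "lead_coeff g = 1" "g \<noteq> 0" "degree g = degree g0"
    using g0 mult[of g0 "[:inverse (lead_coeff g0):]"] by (simp_all add: g_def)
  have "g dvd w" if w: "w \<in> J" for w
  proof (rule ccontr)
    assume "\<not> g dvd w"
    then have "w mod g \<noteq> 0" "degree (w mod g) < degree g"
      using g(3) by (simp_all add: mod_eq_0_iff_dvd degree_mod_less_degree)
    moreover have "w + (- (w div g)) * g \<in> J"
      using add[OF w mult[OF g(1)]] .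
    then have "w mod g \<in> J"
      by (simp add: minus_div_mult_eq_mod)
    ultimately show False
      using min[of "w mod g"] g(4) by linarith
  qed
  moreover have "w \<in> J" if "g dvd w" for w
    using that mult[OF g(1)] by (metis dvdE mult.commute)
  ultimately have "J = {w. g dvd w}"
    by auto
  with g(2) show ?thesis
    by (rule that)
qed

lemma cyclic_code_mult_mod_closed:
  assumes C: "is_cyclic_code n C" and n: "n > 0" and a: "a \<in> Poly ` C"
  shows "(b * a) mod xn_minus_1 n \<in> Poly ` C"
proof (induction b)
  case 0
  have "replicate n 0 \<in> C"
    using C by (simp add: is_cyclic_code_def is_linear_code_def)
  then have "Poly (replicate n 0) \<in> Poly ` C"
    by (rule imageI)
  then show ?case
    by simp
next
  case (pCons c b)
  have len: "length u = n" if "u \<in> C" for u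
    using C that by (auto simp: is_cyclic_code_def is_linear_code_def)
  obtain u where u: "u \<in> C" "a = Poly u"
    using a by blast
  obtain w where w: "w \<in> C" "(b * a) mod xn_minus_1 n = Poly w"
    using pCons.IH by blast
  have cu: "map ((*) c) u \<in> C" and cw: "cyc_shift w \<in> C"
    using C u(1) w(1) by (auto simp: is_cyclic_code_def is_linear_code_def)
  then have sum: "map2 (+) (map ((*) c) u) (cyc_shift w) \<in> C"
    using C by (simp add: is_cyclic_code_def is_linear_code_def)
  have "smult c a mod xn_minus_1 n = Poly (map ((*) c) u)"
    using degree_Poly_less[OF len[OF cu] n] u(2) n
    by (simp add: Poly_map_mult mod_poly_less degree_xn_minus_1)
  moreover have "([:0, 1:] * (b * a)) mod xn_minus_1 n = ([:0, 1:] * Poly w) mod xn_minus_1 n"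
    using w(2) mod_mult_right_eq[of "[:0, 1:]" "b * a" "xn_minus_1 n"] by simp
  then have "([:0, 1:] * (b * a)) mod xn_minus_1 n = Poly (cyc_shift w)"
    using Poly_cyc_shift[OF len[OF w(1)] n] by simp
  moreover have "pCons c b * a = smult c a + [:0, 1:] * (b * a)"
    by simp
  ultimately have "(pCons c b * a) mod xn_minus_1 n = Poly (map2 (+) (map ((*) c) u) (cyc_shift w))"
    using len[OF cu] len[OF cw] by (simp only: poly_mod_add_left Poly_map2_plus)
  with sum show ?case
    by blast
qed

lemma cyclic_code_generator:
  assumes n: "n > 0" and C: "is_cyclic_code n C"
  obtains g where "lead_coeff g = 1" "g dvd xn_minus_1 n" "C = generated_code n g"
proof -
  let ?X = "xn_minus_1 n :: 'a poly"
  have len: "length u = n" if "u \<in> C" for u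
    using C that by (auto simp: is_cyclic_code_def is_linear_code_def)
  define J where "J = {a. a mod ?X \<in> Poly ` C}"
  have "a + b \<in> J" if ab: "a \<in> J" "b \<in> J" for a b
  proof -
    obtain u v where "u \<in> C" "v \<in> C" "a mod ?X = Poly u" "b mod ?X = Poly v"
      using ab unfolding J_def by blast
    moreover have "map2 (+) u v \<in> C"
      using C calculation(1,2) by (simp add: is_cyclic_code_def is_linear_code_def)
    ultimately show ?thesis
      by (force simp: J_def poly_mod_add_left Poly_map2_plus len)
  qed
  moreover have "c * a \<in> J" if "a \<in> J" for a c
    using cyclic_code_mult_mod_closed[OF C n, of "a mod ?X" c] that
    by (simp add: J_def mod_mult_right_eq)
  moreover have "?X \<in> J"
    using cyclic_code_mult_mod_closed[OF C n, of _ 0] C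
    by (force simp: J_def is_cyclic_code_def is_linear_code_def)
  moreover have "?X \<noteq> 0"
    using xn_minus_1_nonzero[OF n] .
  ultimately obtain g where g: "lead_coeff g = 1" "J = {w. g dvd w}"
    by (rule poly_ideal_principal)
  have "C = generated_code n g"
  proof (intro set_eqI iffI)
    fix v assume "v \<in> C"
    then show "v \<in> generated_code n g"
      using g(2) degree_Poly_less[OF len n] len
      by (force simp: J_def generated_code_def mod_poly_less degree_xn_minus_1 n)
  next
    fix v assume "v \<in> generated_code n g"
    then have "length v = n" "Poly v \<in> J"
      using g(2) by (auto simp: generated_code_def)
    moreover have "Poly v mod ?X = Poly v"
      using degree_Poly_less[OF \<open>length v = n\<close> n] by (simp add: mod_poly_less degree_xn_minus_1 n)
    ultimately obtain u where "u \<in> C" "Poly u = Poly v"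
      unfolding J_def by auto
    then show "v \<in> C"
      using Poly_eq_iff_same_length len \<open>length v = n\<close> by metis
  qed
  then show ?thesis
    using that g \<open>?X \<in> J\<close> by blast
qed

lemma generated_code_dvd:
  assumes n: "n > 0" and g: "lead_coeff g = 1" "g dvd xn_minus_1 n"
    and h: "h dvd xn_minus_1 n" and eq: "generated_code n g = generated_code n (h :: 'a :: field poly)"
  shows "h dvd g"
proof (cases "degree g < n")
  case True
  then have "coeff_vec n g \<in> generated_code n g"
    by (simp add: generated_code_def Poly_coeff_vec)
  then have "coeff_vec n g \<in> generated_code n h"
    by (simp only: eq)
  with True show ?thesis
    by (simp add: generated_code_def Poly_coeff_vec)
next
  case False
  obtain k where k: "xn_minus_1 n = g * k"
    using g(2) by (elim dvdE)
  then have "degree k = 0"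
    using False xn_minus_1_nonzero[OF n, where ?'a = 'a] degree_xn_minus_1[OF n, where ?'a = 'a]
    by (auto simp: degree_mult_eq)
  then obtain c where "k = [:c:]" "c \<noteq> 0"
    using k xn_minus_1_nonzero[OF n, where ?'a = 'a] by (metis degree_eq_zeroE mult_zero_right pCons_0_0)
  then show ?thesis
    using h k by (simp add: dvd_smult_cancel)
qed

lemma coeff_mod_xn_minus_1_middle:
  assumes n: "n > 0" and d: "degree (p :: 'a :: field poly) \<le> 2 * n - 2"
  shows "coeff (p mod xn_minus_1 n) (n - 1) = coeff p (n - 1)"
proof -
  define t where "t = p div xn_minus_1 n"
  have p: "p = xn_minus_1 n * t + p mod xn_minus_1 n"
    by (simp add: t_def)
  have "degree (p mod xn_minus_1 n) < n"
    using degree_mod_less[OF xn_minus_1_nonzero[OF n], of p] n by (auto simp: degree_xn_minus_1)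
  moreover have "xn_minus_1 n * t = p - p mod xn_minus_1 n"
    by (simp add: t_def minus_mod_eq_mult_div)
  ultimately have "degree (xn_minus_1 n * t) \<le> 2 * n - 2"
    using d degree_diff_le_max[of p "p mod xn_minus_1 n"] by simp
  then have "t = 0 \<or> degree t < n - 1"
  proof (cases "t = 0")
    case False
    then have "degree (xn_minus_1 n * t) = n + degree t"
      using degree_mult_eq[OF xn_minus_1_nonzero[OF n] False] degree_xn_minus_1[OF n] by simp
    with \<open>degree (xn_minus_1 n * t) \<le> 2 * n - 2\<close> n show ?thesis
      by linarith
  qed simp
  then have "coeff (xn_minus_1 n * t) (n - 1) = 0"
    using n by (auto simp: left_diff_distrib coeff_monom_mult coeff_eq_0)
  then show ?thesis
    by (subst (2) p) simp
qed

lemma orthogonal_to_multiples_iff: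
  assumes n: "n > 0" and g: "g dvd xn_minus_1 n" and V: "degree V \<le> n - 1"
  shows "(\<forall>w. degree w < n \<and> g dvd w \<longrightarrow> coeff (w * V) (n - 1) = 0) \<longleftrightarrow>
    xn_minus_1 n dvd g * (V :: 'a :: field poly)"
proof
  let ?X = "xn_minus_1 n :: 'a poly"
  have deg_mod: "degree (a mod ?X) < n" for a
    using degree_mod_less[OF xn_minus_1_nonzero[OF n], of a] n by (auto simp: degree_xn_minus_1)
  have middle: "coeff (a * V) (n - 1) = coeff ((a * V) mod ?X) (n - 1)" if "degree a < n" for a
    using degree_mult_le[of a V] that V by (intro coeff_mod_xn_minus_1_middle[symmetric] n) linarith
  assume orth: "\<forall>w. degree w < n \<and> g dvd w \<longrightarrow> coeff (w * V) (n - 1) = 0"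
  define Z where "Z = (g * V) mod ?X"
  have "coeff Z i = 0" for i
  proof (cases "i < n")
    case True
    define j where "j = n - 1 - i"
    define w where "w = (monom 1 j * g) mod ?X"
    have "degree w < n" "g dvd w"
      using deg_mod dvd_mod[OF dvd_mult g] by (simp_all add: w_def)
    then have "0 = coeff (w * V) (n - 1)"
      using orth by simp
    also have "\<dots> = coeff ((w * V) mod ?X) (n - 1)"
      using middle[OF \<open>degree w < n\<close>] .
    also have "(w * V) mod ?X = (monom 1 j * Z) mod ?X"
      by (simp add: w_def Z_def mod_mult_left_eq mod_mult_right_eq mult.assoc)
    also have "coeff ((monom 1 j * Z) mod ?X) (n - 1) = coeff (monom 1 j * Z) (n - 1)"
    proof (rule coeff_mod_xn_minus_1_middle[OF n])
      show "degree (monom 1 j * Z) \<le> 2 * n - 2"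
        using degree_mult_le[of "monom 1 j" Z] deg_mod[of "g * V"] True
        by (simp add: Z_def j_def degree_monom_eq)
    qed
    also have "\<dots> = coeff Z i"
      using True by (simp add: j_def coeff_monom_mult)
    finally show ?thesis
      by simp
  qed (use deg_mod[of "g * V"] in \<open>simp add: Z_def coeff_eq_0\<close>)
  then have "Z = 0"
    by (simp add: poly_eq_iff)
  then show "?X dvd g * V"
    by (simp add: Z_def mod_eq_0_iff_dvd)
next
  assume gV: "xn_minus_1 n dvd g * V"
  show "\<forall>w. degree w < n \<and> g dvd w \<longrightarrow> coeff (w * V) (n - 1) = 0"
  proof (intro allI impI)
    fix w assume w: "degree w < n \<and> g dvd w"
    then have "xn_minus_1 n dvd w * V"
      using gV by (metis dvd_trans mult_dvd_mono dvd_refl)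
    moreover have "degree (w * V) \<le> 2 * n - 2"
      using w V degree_mult_le[of w V] by linarith
    ultimately show "coeff (w * V) (n - 1) = 0"
      using coeff_mod_xn_minus_1_middle[OF n] by (metis coeff_0 mod_eq_0_iff_dvd)
  qed
qed

lemma mon_irr_factor_iff_dvd:
  assumes "n > 0" "field_poly.prime (f :: 'a :: field poly)"
  shows "mon_irr_factor n f \<longleftrightarrow> f dvd xn_minus_1 n"
  using assms coeff_0_of_dvd_xn_minus_1 by (auto simp: mon_irr_factor_def field_poly_prime_iff)

lemma square_not_dvd_xn_minus_1:
  assumes n: "n > 0" "of_nat n \<noteq> (0 :: 'a :: field)" and f: "\<not> is_unit f"
  shows "\<not> f ^ 2 dvd (xn_minus_1 n :: 'a poly)"
proof
  assume "f ^ 2 dvd xn_minus_1 n"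
  then obtain k where "xn_minus_1 n = f ^ 2 * k"
    by (elim dvdE)
  then have k: "xn_minus_1 n = f * (f * k)"
    by (simp add: power2_eq_square mult.assoc)
  then have "f dvd pderiv (xn_minus_1 n :: 'a poly)"
    by (simp add: pderiv_mult)
  moreover have "pderiv (xn_minus_1 n :: 'a poly) = smult (of_nat n) (monom 1 (n - 1))"
    by (simp add: pderiv_diff pderiv_monom smult_monom)
  ultimately have "f dvd monom 1 1 * monom 1 (n - 1)"
    using n(2) by (simp add: dvd_smult_cancel)
  then have "f dvd monom 1 n"
    using n(1) by (simp add: mult_monom)
  moreover have "f dvd xn_minus_1 n"
    using k by simp
  ultimately have "f dvd monom 1 n - xn_minus_1 n"
    by (rule dvd_diff)
  with f show False
    by simp
qed

lemma multiplicity_xn_minus_1_power: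
  assumes n: "n > 0" "of_nat n \<noteq> (0 :: 'a :: field)" and r: "field_poly.prime r"
  shows "field_poly.multiplicity r (xn_minus_1 n ^ e :: 'a poly) = (if mon_irr_factor n r then e else 0)"
proof -
  have "field_poly.multiplicity r (xn_minus_1 n :: 'a poly) = (if mon_irr_factor n r then 1 else 0)"
  proof (cases "mon_irr_factor n r")
    case True
    then have "r ^ 1 dvd xn_minus_1 n" "\<not> r ^ Suc 1 dvd xn_minus_1 n"
      using mon_irr_factor_iff_dvd[OF n(1) r] square_not_dvd_xn_minus_1[OF n] r
      by (simp_all add: field_poly_prime_nonunit numeral_2_eq_2)
    with True show ?thesis
      by (simp add: field_poly.multiplicity_eqI[unfolded field_poly_power_eq])
  next
    case False
    then show ?thesis
      using mon_irr_factor_iff_dvd[OF n(1) r] by (simp add: field_poly.not_dvd_imp_multiplicity_0)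
  qed
  moreover have "prime_elem r"
    using r by (simp add: field_poly.prime_def)
  ultimately show ?thesis
    using field_poly_multiplicity_power_distrib[OF _ xn_minus_1_nonzero[OF n(1)], of r e] by simp
qed

lemma multiplicity_prime_times:
  assumes r: "field_poly.prime r" and s: "field_poly.prime s" and w: "w \<noteq> 0"
  shows "field_poly.multiplicity s (r * w :: 'a :: field poly) =
    (if s = r then Suc (field_poly.multiplicity s w) else field_poly.multiplicity s w)"
proof (cases "s = r")
  case True
  then show ?thesis
    using field_poly.multiplicity_times_same[where p = r and x = w] w field_poly_prime_nonunit[OF r]
    by simp
next
  case False
  then have "\<not> s dvd r"
    using field_poly.primes_dvd_imp_eq[OF s r] by blast
  with False show ?thesis
    using s by (simp add: field_poly.multiplicity_prime_elem_times_other field_poly.prime_def)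
qed

lemma ex_common_multiple_degree_less_iff:
  fixes X A B :: "'a :: field poly"
  assumes X: "X \<noteq> 0" and A: "A dvd X" and B: "B dvd X"
  shows "(\<exists>w. w \<noteq> 0 \<and> degree w < degree X \<and> A dvd w \<and> B dvd w) \<longleftrightarrow>
    (\<exists>r. field_poly.prime r \<and> field_poly.multiplicity r A < field_poly.multiplicity r X \<and>
      field_poly.multiplicity r B < field_poly.multiplicity r X)"
proof
  assume "\<exists>w. w \<noteq> 0 \<and> degree w < degree X \<and> A dvd w \<and> B dvd w"
  then obtain w where w: "w \<noteq> 0" "degree w < degree X" "A dvd w" "B dvd w"
    by blast
  show "\<exists>r. field_poly.prime r \<and> field_poly.multiplicity r A < field_poly.multiplicity r X \<and>
      field_poly.multiplicity r B < field_poly.multiplicity r X"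
  proof (rule ccontr)
    assume "\<not> ?thesis"
    then have "field_poly.multiplicity r X \<le> field_poly.multiplicity r w" if "field_poly.prime r" for r
      using that field_poly.dvd_imp_multiplicity_le[OF w(3) w(1), of r]
        field_poly.dvd_imp_multiplicity_le[OF w(4) w(1), of r] by force
    then have "X dvd w"
      using X by (intro field_poly.multiplicity_le_imp_dvd)
    then show False
      using w(1,2) dvd_imp_degree_le by fastforce
  qed
next
  assume "\<exists>r. field_poly.prime r \<and> field_poly.multiplicity r A < field_poly.multiplicity r X \<and>
      field_poly.multiplicity r B < field_poly.multiplicity r X"
  then obtain r where r: "field_poly.prime r" and less: "field_poly.multiplicity r A < field_poly.multiplicity r X"
      "field_poly.multiplicity r B < field_poly.multiplicity r X"
    by blast
  then have "r dvd X"
    using X by (simp add: field_poly.prime_multiplicity_gt_zero_iff[symmetric] field_poly.prime_def)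
  then obtain w where Xw: "X = r * w"
    by (elim dvdE)
  then have "w \<noteq> 0"
    using X by auto
  have mult_w: "field_poly.multiplicity s X = (if s = r then Suc (field_poly.multiplicity s w)
      else field_poly.multiplicity s w)" if "field_poly.prime s" for s
    unfolding Xw using multiplicity_prime_times[OF r that \<open>w \<noteq> 0\<close>] .
  have "C dvd w" if "C dvd X" "field_poly.multiplicity r C < field_poly.multiplicity r X" for C
  proof (rule field_poly.multiplicity_le_imp_dvd)
    show "C \<noteq> 0"
      using that(1) X by auto
    show "field_poly.multiplicity s C \<le> field_poly.multiplicity s w" if "field_poly.prime s" for s
      using field_poly.dvd_imp_multiplicity_le[OF \<open>C dvd X\<close> X, of s] mult_w[OF that]
        \<open>field_poly.multiplicity r C < field_poly.multiplicity r X\<close>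
      by (auto split: if_splits)
  qed
  moreover have "degree r > 0"
    using field_poly_prime_nonunit[OF r] is_unit_iff_degree by blast
  then have "degree w < degree X"
    using Xw \<open>w \<noteq> 0\<close> r by (simp add: degree_mult_eq field_poly_prime_nonunit)
  ultimately show "\<exists>w. w \<noteq> 0 \<and> degree w < degree X \<and> A dvd w \<and> B dvd w"
    using \<open>w \<noteq> 0\<close> A B less by blast
qed

lemma multiplicity_prod_prime_powers:
  assumes T: "finite T" "\<forall>f\<in>T. field_poly.prime f" and r: "field_poly.prime r"
  shows "field_poly.multiplicity r (\<Prod>f\<in>T. f ^ e :: 'a :: field poly) = (if r \<in> T then e else 0)"
proof -
  have "0 \<notin> (\<lambda>f. f ^ e) ` T"
    using T(2) by (auto simp: field_poly_prime_nonunit)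
  then have "field_poly.multiplicity r (\<Prod>f\<in>T. f ^ e) = (\<Sum>f\<in>T. field_poly.multiplicity r (f ^ e))"
    using r T(1) field_poly.prime_elem_multiplicity_prod_distrib[of r "\<lambda>f. f ^ e" T]
    by (simp add: field_poly.prime_def field_poly_prod_eq)
  also have "\<dots> = (\<Sum>f\<in>T. if r = f then e else 0)"
  proof (intro sum.cong refl)
    fix f assume "f \<in> T"
    then have "field_poly.prime f"
      using T(2) by blast
    then have "field_poly.multiplicity r f = (if r = f then 1 else 0)"
      using r field_poly.multiplicity_self field_poly.prime_multiplicity_other
      by (auto simp: field_poly_prime_nonunit)
    moreover have "field_poly.multiplicity r (f ^ e) = e * field_poly.multiplicity r f"
      using r field_poly_prime_nonunit[OF \<open>field_poly.prime f\<close>]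
      by (simp add: field_poly_multiplicity_power_distrib field_poly.prime_def)
    ultimately show "field_poly.multiplicity r (f ^ e) = (if r = f then e else 0)"
      by simp
  qed
  also have "\<dots> = (if r \<in> T then e else 0)"
    using T(1) by (simp add: sum.delta)
  finally show ?thesis .
qed

lemma monic_eq_prod_prime_powers:
  assumes g: "lead_coeff g = 1" and T: "finite T" "\<forall>f\<in>T. field_poly.prime f"
    and mult: "\<And>r. field_poly.prime r \<Longrightarrow> field_poly.multiplicity r g = (if r \<in> T then e else 0)"
  shows "g = (\<Prod>f\<in>T. f ^ e :: 'a :: field poly)"
proof -
  have monic: "lead_coeff (\<Prod>f\<in>T. f ^ e) = 1"
    using T(2) by (simp add: lead_coeff_prod lead_coeff_power field_poly_prime_iff)
  have "smult (inverse (lead_coeff g)) g =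
      smult (inverse (lead_coeff (\<Prod>f\<in>T. f ^ e))) (\<Prod>f\<in>T. f ^ e)"
    using g monic mult multiplicity_prod_prime_powers[OF T]
    by (intro field_poly.multiplicity_eq_imp_eq) auto
  then show ?thesis
    using g monic by simp
qed

lemma card_involution_invariant_subsets:
  fixes d :: "'b \<Rightarrow> 'b"
  assumes fin: "finite S" and d_S: "\<And>f. f \<in> S \<Longrightarrow> d f \<in> S" and d_d: "\<And>f. f \<in> S \<Longrightarrow> d (d f) = f"
  shows "card {T. T \<subseteq> S \<and> (\<forall>f\<in>T. d f \<in> T)} =
    2 ^ (card {f. f \<in> S \<and> f = d f} + card {{f, d f} | f. f \<in> S \<and> d f \<in> S \<and> f \<noteq> d f})"
proof -
  define orbits where "orbits = (\<lambda>f. {f, d f}) ` S"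
  have orbit_in: "x \<in> S \<and> d x \<in> Q \<and> Q = {x, d x}" if Q: "Q \<in> orbits" and x: "x \<in> Q" for Q x
  proof -
    obtain f where f: "f \<in> S" "Q = {f, d f}"
      using Q by (auto simp: orbits_def)
    then consider "x = f" | "x = d f"
      using x by blast
    then show ?thesis
      by cases (use f d_S d_d[OF f(1)] in \<open>simp_all add: insert_commute\<close>)
  qed
  have "bij_betw (\<lambda>T. {Q \<in> orbits. Q \<subseteq> T}) {T. T \<subseteq> S \<and> (\<forall>f\<in>T. d f \<in> T)} (Pow orbits)"
  proof (rule bij_betw_byWitness[where f' = Union])
    show "\<forall>T\<in>{T. T \<subseteq> S \<and> (\<forall>f\<in>T. d f \<in> T)}. \<Union> {Q \<in> orbits. Q \<subseteq> T} = T"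
    proof (intro ballI equalityI subsetI)
      fix T f assume T: "T \<in> {T. T \<subseteq> S \<and> (\<forall>f\<in>T. d f \<in> T)}" and "f \<in> T"
      then have "{f, d f} \<in> {Q \<in> orbits. Q \<subseteq> T}"
        by (auto simp: orbits_def)
      then show "f \<in> \<Union> {Q \<in> orbits. Q \<subseteq> T}"
        by blast
    qed blast
    show "\<forall>U\<in>Pow orbits. {Q \<in> orbits. Q \<subseteq> \<Union> U} = U"
    proof (intro ballI equalityI subsetI)
      fix U Q assume U: "U \<in> Pow orbits" and Q: "Q \<in> {Q \<in> orbits. Q \<subseteq> \<Union> U}"
      then obtain f where f: "f \<in> S" "Q = {f, d f}"
        by (auto simp: orbits_def)
      then obtain Q' where "Q' \<in> U" "f \<in> Q'"
        using Q by blast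
      then have "Q' = Q"
        using orbit_in U f by blast
      then show "Q \<in> U"
        using \<open>Q' \<in> U\<close> by simp
    qed blast
    show "(\<lambda>T. {Q \<in> orbits. Q \<subseteq> T}) ` {T. T \<subseteq> S \<and> (\<forall>f\<in>T. d f \<in> T)} \<subseteq> Pow orbits"
      by blast
    show "Union ` Pow orbits \<subseteq> {T. T \<subseteq> S \<and> (\<forall>f\<in>T. d f \<in> T)}"
    proof (intro subsetI CollectI conjI ballI)
      fix T x assume "T \<in> Union ` Pow orbits" "x \<in> T"
      then obtain Q where "Q \<in> orbits" "x \<in> Q" "Q \<subseteq> T"
        by blast
      then show "x \<in> S" "d x \<in> T"
        using orbit_in by blast+
    qed
  qed
  then have "card {T. T \<subseteq> S \<and> (\<forall>f\<in>T. d f \<in> T)} = card (Pow orbits)"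
    by (rule bij_betw_same_card)
  also have "\<dots> = 2 ^ card orbits"
    using fin by (simp add: orbits_def card_Pow)
  finally have card_orbits: "card {T. T \<subseteq> S \<and> (\<forall>f\<in>T. d f \<in> T)} = 2 ^ card orbits" .
  have orbits: "orbits = (\<lambda>f. {f}) ` {f. f \<in> S \<and> f = d f} \<union>
      {{f, d f} | f. f \<in> S \<and> d f \<in> S \<and> f \<noteq> d f}" (is "_ = ?fixed \<union> ?pairs")
  proof (intro equalityI subsetI)
    fix Q assume "Q \<in> orbits"
    then obtain f where "f \<in> S" "Q = {f, d f}"
      by (auto simp: orbits_def)
    show "Q \<in> ?fixed \<union> ?pairs"
    proof (cases "f = d f")
      case True
      then have "Q = {f}"
        using \<open>Q = {f, d f}\<close> by simp
      with True \<open>f \<in> S\<close> show ?thesis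
        by blast
    next
      case False
      with \<open>f \<in> S\<close> \<open>Q = {f, d f}\<close> d_S show ?thesis
        by blast
    qed
  next
    fix Q assume "Q \<in> ?fixed \<union> ?pairs"
    then obtain f where "f \<in> S" "Q = {f, d f}"
    proof
      assume "Q \<in> ?fixed"
      then obtain f where "f \<in> S" "f = d f" "Q = {f}"
        by blast
      then show thesis
        using that[of f] by simp
    next
      assume "Q \<in> ?pairs"
      then obtain f where "f \<in> S" "Q = {f, d f}"
        by blast
      then show thesis
        by (rule that)
    qed
    then show "Q \<in> orbits"
      by (simp add: orbits_def)
  qed
  have "?fixed \<inter> ?pairs = {}"
  proof (rule equals0I)
    fix Q assume "Q \<in> ?fixed \<inter> ?pairs"
    then obtain f g where "Q = {f}" "Q = {g, d g}" "g \<noteq> d g"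
      by blast
    then have "g = f" "d g = f"
      by (metis insertI1 singletonD, metis insertI1 insert_commute singletonD)
    with \<open>g \<noteq> d g\<close> show False
      by simp
  qed
  moreover have "finite ?fixed" "finite ?pairs"
    using fin finite_subset[OF _ finite_imageI[OF fin, of "\<lambda>f. {f, d f}"]] by (auto simp: orbits_def)
  ultimately have "card orbits = card ?fixed + card ?pairs"
    unfolding orbits by (rule card_Un_disjoint[rotated 2])
  also have "card ?fixed = card {f. f \<in> S \<and> f = d f}"
    by (rule card_image) (simp add: inj_on_def)
  finally show ?thesis
    using card_orbits by simp
qed

context
  fixes S :: "'a :: field poly set" and d :: "'a poly \<Rightarrow> 'a poly" and e :: nat and X :: "'a poly"
  assumes S_prime: "\<And>f. f \<in> S \<Longrightarrow> field_poly.prime f"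
    and d_S: "\<And>f. f \<in> S \<Longrightarrow> d f \<in> S" and d_d: "\<And>f. f \<in> S \<Longrightarrow> d (d f) = f"
    and e_pos: "e > 0" and X_nonzero: "X \<noteq> 0"
    and multiplicity_X: "\<And>r. field_poly.prime r \<Longrightarrow>
      field_poly.multiplicity r X = (if r \<in> S then e else 0)"
begin

lemma finite_prime_support: "finite S"
proof (rule finite_subset)
  show "S \<subseteq> {p. field_poly.prime p \<and> p dvd X}"
  proof (intro subsetI CollectI conjI)
    fix f assume "f \<in> S"
    then have "field_poly.prime f" "field_poly.multiplicity f X > 0"
      using S_prime multiplicity_X e_pos by simp_all
    then show "field_poly.prime f" "f dvd X"
      using field_poly.prime_multiplicity_gt_zero_iff[OF _ X_nonzero, of f]
      by (simp_all add: field_poly.prime_def)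
  qed
qed (rule field_poly.finite_prime_divisors[OF X_nonzero])

lemma multiplicity_invariant_divisor:
  assumes g: "g dvd X" "\<forall>f\<in>S. field_poly.multiplicity f g = e \<or> field_poly.multiplicity (d f) g = 0"
    and r: "field_poly.prime r"
  shows "field_poly.multiplicity r g = (if r \<in> S \<and> field_poly.multiplicity r g = e then e else 0)"
proof (cases "r \<in> S")
  case True
  show ?thesis
  proof (cases "field_poly.multiplicity r g = e")
    case False
    then have "field_poly.multiplicity (d r) g = 0"
      using g(2) True by blast
    moreover have "field_poly.multiplicity (d r) g = e \<or> field_poly.multiplicity (d (d r)) g = 0"
      using bspec[OF g(2) d_S[OF True]] .
    ultimately show ?thesis
      using e_pos d_d[OF True] by simp
  qed (use True in simp)
next
  case False
  then have "field_poly.multiplicity r g = 0"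
    using field_poly.dvd_imp_multiplicity_le[OF g(1) X_nonzero, of r] multiplicity_X[OF r] by simp
  with False show ?thesis
    by simp
qed

lemma multiplicity_prod_powers:
  assumes "T \<subseteq> S" "field_poly.prime r"
  shows "field_poly.multiplicity r (\<Prod>f\<in>T. f ^ e) = (if r \<in> T then e else 0)"
  using multiplicity_prod_prime_powers[OF finite_subset[OF assms(1) finite_prime_support]]
    assms S_prime by blast

lemma prod_powers_invariant_divisor:
  assumes T: "T \<subseteq> S" "\<forall>f\<in>T. d f \<in> T"
  shows "lead_coeff (\<Prod>f\<in>T. f ^ e) = 1 \<and> (\<Prod>f\<in>T. f ^ e) dvd X \<and>
    (\<forall>f\<in>S. field_poly.multiplicity f (\<Prod>f\<in>T. f ^ e) = e \<or>
      field_poly.multiplicity (d f) (\<Prod>f\<in>T. f ^ e) = 0)"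
proof (intro conjI ballI)
  show monic: "lead_coeff (\<Prod>f\<in>T. f ^ e) = 1"
    unfolding lead_coeff_prod lead_coeff_power
    using T(1) S_prime by (intro prod.neutral) (auto simp: field_poly_prime_iff)
  show "(\<Prod>f\<in>T. f ^ e) dvd X"
  proof (rule field_poly.multiplicity_le_imp_dvd)
    show "(\<Prod>f\<in>T. f ^ e) \<noteq> 0"
      using monic by auto
    show "field_poly.multiplicity r (\<Prod>f\<in>T. f ^ e) \<le> field_poly.multiplicity r X"
      if "field_poly.prime r" for r
      using multiplicity_prod_powers[OF T(1) that] multiplicity_X[OF that] T(1) by auto
  qed
  fix f assume "f \<in> S"
  show "field_poly.multiplicity f (\<Prod>f\<in>T. f ^ e) = e \<or>
      field_poly.multiplicity (d f) (\<Prod>f\<in>T. f ^ e) = 0"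
  proof (cases "f \<in> T")
    case False
    then have "d f \<notin> T"
      using T(2) d_d[OF \<open>f \<in> S\<close>] by metis
    then show ?thesis
      using multiplicity_prod_powers[OF T(1) S_prime[OF d_S[OF \<open>f \<in> S\<close>]]] by simp
  qed (use multiplicity_prod_powers[OF T(1) S_prime[OF \<open>f \<in> S\<close>]] in simp)
qed

lemma invariant_divisor_eq_prod_powers:
  assumes g: "lead_coeff g = 1" "g dvd X"
    "\<forall>f\<in>S. field_poly.multiplicity f g = e \<or> field_poly.multiplicity (d f) g = 0"
  defines "T \<equiv> {f \<in> S. field_poly.multiplicity f g = e}"
  shows "T \<subseteq> S" "\<forall>f\<in>T. d f \<in> T" "g = (\<Prod>f\<in>T. f ^ e)"
proof -
  show "T \<subseteq> S"
    by (simp add: T_def)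
  show "\<forall>f\<in>T. d f \<in> T"
  proof
    fix f assume "f \<in> T"
    then have f: "f \<in> S" "field_poly.multiplicity f g = e"
      by (simp_all add: T_def)
    then have "field_poly.multiplicity (d f) g = e \<or> field_poly.multiplicity (d (d f)) g = 0"
      using bspec[OF g(3) d_S[OF f(1)]] by simp
    then show "d f \<in> T"
      using f d_S[OF f(1)] d_d[OF f(1)] e_pos by (auto simp: T_def)
  qed
  show "g = (\<Prod>f\<in>T. f ^ e)"
  proof (rule monic_eq_prod_prime_powers[OF g(1)])
    show "finite T" "\<forall>f\<in>T. field_poly.prime f"
      using finite_subset[OF _ finite_prime_support] S_prime by (auto simp: T_def)
    show "field_poly.multiplicity r g = (if r \<in> T then e else 0)" if "field_poly.prime r" for r
      using multiplicity_invariant_divisor[OF g(2,3) that] by (simp add: T_def)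
  qed
qed

lemma card_invariant_monic_divisors:
  "card {g. lead_coeff g = 1 \<and> g dvd X \<and>
      (\<forall>f\<in>S. field_poly.multiplicity f g = e \<or> field_poly.multiplicity (d f) g = 0)} =
    card {T. T \<subseteq> S \<and> (\<forall>f\<in>T. d f \<in> T)}"
proof (rule bij_betw_same_card[symmetric])
  show "bij_betw (\<lambda>T. \<Prod>f\<in>T. f ^ e) {T. T \<subseteq> S \<and> (\<forall>f\<in>T. d f \<in> T)} {g. lead_coeff g = 1 \<and> g dvd X \<and>
      (\<forall>f\<in>S. field_poly.multiplicity f g = e \<or> field_poly.multiplicity (d f) g = 0)}"
  proof (rule bij_betw_byWitness[where f' = "\<lambda>g. {f \<in> S. field_poly.multiplicity f g = e}"])
    show "\<forall>T\<in>{T. T \<subseteq> S \<and> (\<forall>f\<in>T. d f \<in> T)}.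
        {f \<in> S. field_poly.multiplicity f (\<Prod>f\<in>T. f ^ e) = e} = T"
    proof (intro ballI set_eqI)
      fix T f assume "T \<in> {T. T \<subseteq> S \<and> (\<forall>f\<in>T. d f \<in> T)}"
      then have "T \<subseteq> S"
        by simp
      then show "f \<in> {f \<in> S. field_poly.multiplicity f (\<Prod>f\<in>T. f ^ e) = e} \<longleftrightarrow> f \<in> T"
        using multiplicity_prod_powers[OF \<open>T \<subseteq> S\<close> S_prime, of f] e_pos by (auto split: if_splits)
    qed
    show "\<forall>g\<in>{g. lead_coeff g = 1 \<and> g dvd X \<and>
        (\<forall>f\<in>S. field_poly.multiplicity f g = e \<or> field_poly.multiplicity (d f) g = 0)}.
        (\<Prod>f\<in>{f \<in> S. field_poly.multiplicity f g = e}. f ^ e) = g"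
    proof
      fix g assume "g \<in> {g. lead_coeff g = 1 \<and> g dvd X \<and>
        (\<forall>f\<in>S. field_poly.multiplicity f g = e \<or> field_poly.multiplicity (d f) g = 0)}"
      then have "g = (\<Prod>f\<in>{f \<in> S. field_poly.multiplicity f g = e}. f ^ e)"
        by (intro invariant_divisor_eq_prod_powers(3)) simp_all
      then show "(\<Prod>f\<in>{f \<in> S. field_poly.multiplicity f g = e}. f ^ e) = g"
        by (rule sym)
    qed
    show "(\<lambda>T. \<Prod>f\<in>T. f ^ e) ` {T. T \<subseteq> S \<and> (\<forall>f\<in>T. d f \<in> T)} \<subseteq> {g. lead_coeff g = 1 \<and> g dvd X \<and>
        (\<forall>f\<in>S. field_poly.multiplicity f g = e \<or> field_poly.multiplicity (d f) g = 0)}"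
    proof (rule image_subsetI)
      fix T assume "T \<in> {T. T \<subseteq> S \<and> (\<forall>f\<in>T. d f \<in> T)}"
      then show "(\<Prod>f\<in>T. f ^ e) \<in> {g. lead_coeff g = 1 \<and> g dvd X \<and>
          (\<forall>f\<in>S. field_poly.multiplicity f g = e \<or> field_poly.multiplicity (d f) g = 0)}"
        using prod_powers_invariant_divisor[of T] by simp
    qed
    show "(\<lambda>g. {f \<in> S. field_poly.multiplicity f g = e}) ` {g. lead_coeff g = 1 \<and> g dvd X \<and>
        (\<forall>f\<in>S. field_poly.multiplicity f g = e \<or> field_poly.multiplicity (d f) g = 0)} \<subseteq>
        {T. T \<subseteq> S \<and> (\<forall>f\<in>T. d f \<in> T)}"
    proof (rule image_subsetI)
      fix g assume "g \<in> {g. lead_coeff g = 1 \<and> g dvd X \<and>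
          (\<forall>f\<in>S. field_poly.multiplicity f g = e \<or> field_poly.multiplicity (d f) g = 0)}"
      then show "{f \<in> S. field_poly.multiplicity f g = e} \<in> {T. T \<subseteq> S \<and> (\<forall>f\<in>T. d f \<in> T)}"
        using invariant_divisor_eq_prod_powers(1,2)[of g] by simp
    qed
  qed
qed

end

locale frobenius_involution =
  fixes q :: nat
  assumes power_q_add: "(a + b :: 'a :: field) ^ q = a ^ q + b ^ q"
    and power_q_power_q: "(a ^ q) ^ q = a"
begin

abbreviation \<sigma> :: "'a \<Rightarrow> 'a" where
  "\<sigma> \<equiv> conjq q"

abbreviation dagger :: "'a poly \<Rightarrow> 'a poly" where
  "dagger \<equiv> dagger_poly q"

lemma q_pos: "q > 0"
  using power_q_power_q[of 0] by (cases q) auto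

lemma conjq_add: "\<sigma> (a + b) = \<sigma> a + \<sigma> b"
  by (simp add: conjq_def power_q_add)

lemma conjq_mult: "\<sigma> (a * b) = \<sigma> a * \<sigma> b"
  by (simp add: conjq_def power_mult_distrib)

lemma conjq_0 [simp]: "\<sigma> 0 = 0"
  using q_pos by (simp add: conjq_def)

lemma conjq_1 [simp]: "\<sigma> 1 = 1"
  by (simp add: conjq_def)

lemma conjq_conjq [simp]: "\<sigma> (\<sigma> a) = a"
  by (simp add: conjq_def power_q_power_q)

lemma conjq_eq_iff [simp]: "\<sigma> a = \<sigma> b \<longleftrightarrow> a = b"
  by (metis conjq_conjq)

lemma conjq_eq_0_iff [simp]: "\<sigma> a = 0 \<longleftrightarrow> a = 0"
  by (metis conjq_0 conjq_eq_iff)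

lemma conjq_uminus: "\<sigma> (- a) = - \<sigma> a"
  using conjq_add[of "- a" a] by (simp add: eq_neg_iff_add_eq_0)

lemma conjq_inverse: "\<sigma> (inverse a) = inverse (\<sigma> a)"
  by (simp add: conjq_def power_inverse)

lemma conjq_sum: "\<sigma> (sum f A) = (\<Sum>i\<in>A. \<sigma> (f i))"
  by (induction A rule: infinite_finite_induct) (auto simp: conjq_add)

lemma map_poly_conjq_mult:
  "map_poly \<sigma> (a * b) = map_poly \<sigma> a * map_poly \<sigma> b"
  by (intro poly_eqI) (simp add: coeff_map_poly coeff_mult conjq_sum conjq_mult)

lemma degree_map_poly_conjq [simp]: "degree (map_poly \<sigma> p) = degree p"
  by (cases "p = 0") (auto intro: map_poly_degree_eq)

text \<open>The conjugate reciprocal with respect to the degree bound \<open>k\<close>: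
  \<open>conj_recip k p = x\<^sup>k \<cdot> p\<^sup>\<sigma>(1/x)\<close>, so that \<open>f\<^sup>\<dagger>\<close> is \<open>conj_recip (degree f) f\<close> up to a scalar.\<close>

definition conj_recip :: "nat \<Rightarrow> 'a poly \<Rightarrow> 'a poly" where
  "conj_recip k p = (\<Sum>i\<le>k. monom (\<sigma> (coeff p i)) (k - i))"

lemma coeff_conj_recip:
  "coeff (conj_recip k p) j = (if j \<le> k then \<sigma> (coeff p (k - j)) else 0)"
proof -
  have "coeff (conj_recip k p) j = (\<Sum>i\<le>k. if i = k - j \<and> j \<le> k then \<sigma> (coeff p i) else 0)"
    unfolding conj_recip_def coeff_sum coeff_monom by (intro sum.cong) auto
  then show ?thesis
    by (cases "j \<le> k") simp_all
qed

lemma conj_recip_conj_recip: "degree p \<le> k \<Longrightarrow> conj_recip k (conj_recip k p) = p"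
  by (intro poly_eqI) (auto simp: coeff_conj_recip coeff_eq_0)

lemma degree_conj_recip_le: "degree (conj_recip k p) \<le> k"
  by (rule degree_le) (simp add: coeff_conj_recip)

lemma degree_conj_recip: "coeff p 0 \<noteq> 0 \<Longrightarrow> degree (conj_recip k p) = k"
  by (intro antisym degree_conj_recip_le le_degree) (simp add: coeff_conj_recip)

lemma conj_recip_eq_0_iff [simp]: "degree p \<le> k \<Longrightarrow> conj_recip k p = 0 \<longleftrightarrow> p = 0"
  by (metis conj_recip_conj_recip degree_0 le0 poly_eqI coeff_conj_recip coeff_0 conjq_0)

lemma conj_recip_smult: "conj_recip k (smult c p) = smult (\<sigma> c) (conj_recip k p)"
  by (intro poly_eqI) (simp add: coeff_conj_recip conjq_mult)

lemma conj_recip_eq_reflect: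
  "degree p \<le> k \<Longrightarrow> conj_recip k p = monom 1 (k - degree p) * reflect_poly (map_poly \<sigma> p)"
  by (intro poly_eqI)
    (auto simp: coeff_conj_recip coeff_monom_mult coeff_reflect_poly coeff_map_poly coeff_eq_0)

lemma conj_recip_mult:
  assumes "degree a \<le> k" "degree b \<le> l"
  shows "conj_recip (k + l) (a * b) = conj_recip k a * conj_recip l b"
proof (cases "a = 0 \<or> b = 0")
  case False
  then have "degree (a * b) = degree a + degree b"
    by (simp add: degree_mult_eq)
  with assms show ?thesis
    by (simp add: conj_recip_eq_reflect map_poly_conjq_mult reflect_poly_mult mult_monom mult_ac)
qed (auto simp: conj_recip_def)

lemma conj_recip_power:
  assumes "degree a \<le> d"
  shows "conj_recip (j * d) (a ^ j) = conj_recip d a ^ j"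
proof (induction j)
  case 0
  show ?case
    by (intro poly_eqI) (simp add: coeff_conj_recip coeff_1)
next
  case (Suc j)
  have "degree (a ^ j) \<le> j * d"
    using order_trans[OF degree_power_le[of a j]] assms by (simp add: mult.commute)
  then have "conj_recip (d + j * d) (a * a ^ j) = conj_recip d a * conj_recip (j * d) (a ^ j)"
    using assms by (intro conj_recip_mult)
  then show ?case
    using Suc by simp
qed

lemma conj_recip_mult_split:
  assumes "degree (a * b) \<le> k" "a \<noteq> 0"
  shows "conj_recip k (a * b) = conj_recip (degree a) a * conj_recip (k - degree a) b"
proof (cases "b = 0")
  case False
  then have "degree b \<le> k - degree a" "degree a \<le> k"
    using assms by (simp_all add: degree_mult_eq)
  then show ?thesis
    using conj_recip_mult[of a "degree a" b "k - degree a"] by simp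
qed (simp add: conj_recip_def)

lemma dagger_poly_eq_conj_recip:
  "dagger f = smult (\<sigma> (inverse (coeff f 0))) (conj_recip (degree f) f)"
  by (intro poly_eqI)
    (auto simp: dagger_poly_def conj_poly_def recip_poly_def coeff_map_poly coeff_conj_recip
      coeff_reflect_poly conjq_mult)

lemma conj_recip_xn_minus_1: "n > 0 \<Longrightarrow> conj_recip n (xn_minus_1 n) = - xn_minus_1 n"
  by (intro poly_eqI) (auto simp: coeff_conj_recip coeff_monom conjq_uminus)

lemma herm_ip_eq_coeff:
  assumes "length u = n" "length v = n" "n > 0"
  shows "herm_ip q u v = coeff (Poly u * conj_recip (n - 1) (Poly v)) (n - 1)"
proof -
  have "{..n - 1} = {..<n}"
    using assms(3) by auto
  then have "coeff (Poly u * conj_recip (n - 1) (Poly v)) (n - 1) =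
      (\<Sum>i<n. coeff (Poly u) i * coeff (conj_recip (n - 1) (Poly v)) (n - 1 - i))"
    by (simp add: coeff_mult)
  also have "\<dots> = (\<Sum>i<n. u ! i * \<sigma> (v ! i))"
    using assms by (intro sum.cong) (auto simp: coeff_conj_recip nth_default_def)
  finally show ?thesis
    using assms(1) by (simp add: herm_ip_def)
qed

lemma herm_dual_generated_code_iff:
  assumes n: "n > 0" and g: "g dvd xn_minus_1 n"
  shows "v \<in> herm_dual q n (generated_code n g) \<longleftrightarrow>
    length v = n \<and> xn_minus_1 n dvd g * conj_recip (n - 1) (Poly v)"
proof (cases "length v = n")
  case True
  let ?V = "conj_recip (n - 1) (Poly v)"
  have "(\<forall>u\<in>generated_code n g. herm_ip q u v = 0) \<longleftrightarrow>
    (\<forall>w. degree w < n \<and> g dvd w \<longrightarrow> coeff (w * ?V) (n - 1) = 0)"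
  proof
    assume orth: "\<forall>u\<in>generated_code n g. herm_ip q u v = 0"
    show "\<forall>w. degree w < n \<and> g dvd w \<longrightarrow> coeff (w * ?V) (n - 1) = 0"
    proof (intro allI impI)
      fix w assume w: "degree w < n \<and> g dvd w"
      then have "coeff_vec n w \<in> generated_code n g"
        by (simp add: generated_code_def Poly_coeff_vec)
      with orth have "herm_ip q (coeff_vec n w) v = 0"
        by blast
      with w show "coeff (w * ?V) (n - 1) = 0"
        using herm_ip_eq_coeff[OF length_coeff_vec True n] by (simp add: Poly_coeff_vec)
    qed
  qed (use herm_ip_eq_coeff[OF _ True n] degree_Poly_less[OF _ n] in \<open>auto simp: generated_code_def\<close>)
  also have "\<dots> \<longleftrightarrow> xn_minus_1 n dvd g * ?V"
    using orthogonal_to_multiples_iff[OF n g degree_conj_recip_le] .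
  finally show ?thesis
    using True by (simp add: herm_dual_def)
qed (simp add: herm_dual_def)

lemma conj_recip_dvd_iff:
  assumes w: "degree w \<le> k" and h: "coeff h 0 \<noteq> 0"
  shows "h dvd conj_recip k w \<longleftrightarrow> conj_recip (degree h) h dvd w"
proof
  assume "h dvd conj_recip k w"
  then obtain c where c: "conj_recip k w = h * c"
    by (elim dvdE)
  have "w = conj_recip k (h * c)"
    using c conj_recip_conj_recip[OF w] by simp
  also have "\<dots> = conj_recip (degree h) h * conj_recip (k - degree h) c"
    using c h degree_conj_recip_le[of k w] by (intro conj_recip_mult_split) auto
  finally show "conj_recip (degree h) h dvd w"
    by simp
next
  let ?H = "conj_recip (degree h) h"
  assume "?H dvd w"
  then obtain c where c: "w = ?H * c"
    by (elim dvdE)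
  have H: "?H \<noteq> 0" "degree ?H = degree h"
    using h degree_conj_recip[OF h] by (auto simp: degree_conj_recip)
  have "conj_recip k w = conj_recip (degree ?H) ?H * conj_recip (k - degree ?H) c"
    unfolding c by (rule conj_recip_mult_split) (use c w H(1) in auto)
  then show "h dvd conj_recip k w"
    by (simp add: H(2) conj_recip_conj_recip)
qed

lemma is_HCD_generated_code_iff:
  assumes n: "n > 0" and g: "g dvd xn_minus_1 n"
  defines "h \<equiv> xn_minus_1 n div g"
  shows "is_HCD q n (generated_code n g) \<longleftrightarrow>
    \<not> (\<exists>w. w \<noteq> 0 \<and> degree w < n \<and> g dvd w \<and> conj_recip (degree h) h dvd w)"
proof -
  have X: "xn_minus_1 n = g * h"
    using g by (simp add: h_def)
  then have "g \<noteq> 0"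
    using xn_minus_1_nonzero[OF n] by auto
  have h0: "coeff h 0 \<noteq> 0"
    using coeff_0_of_dvd_xn_minus_1[OF n, of h] X by simp
  have mem: "v \<in> generated_code n g \<inter> herm_dual q n (generated_code n g) \<longleftrightarrow>
      length v = n \<and> g dvd Poly v \<and> conj_recip (degree h) h dvd Poly v" for v
  proof (cases "length v = n")
    case True
    have "degree (Poly v) \<le> n - 1"
      using degree_Poly_less[OF True n] by linarith
    then have "h dvd conj_recip (n - 1) (Poly v) \<longleftrightarrow> conj_recip (degree h) h dvd Poly v"
      using h0 by (rule conj_recip_dvd_iff)
    moreover have "xn_minus_1 n dvd g * conj_recip (n - 1) (Poly v) \<longleftrightarrow>
        h dvd conj_recip (n - 1) (Poly v)"
      using X \<open>g \<noteq> 0\<close> by simp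
    ultimately show ?thesis
      using herm_dual_generated_code_iff[OF n g, of v] True by (simp add: generated_code_def)
  qed (simp add: generated_code_def)
  show ?thesis
  proof
    assume hcd: "is_HCD q n (generated_code n g)"
    show "\<not> (\<exists>w. w \<noteq> 0 \<and> degree w < n \<and> g dvd w \<and> conj_recip (degree h) h dvd w)"
    proof
      assume "\<exists>w. w \<noteq> 0 \<and> degree w < n \<and> g dvd w \<and> conj_recip (degree h) h dvd w"
      then obtain w where w: "w \<noteq> 0" "degree w < n" "g dvd w" "conj_recip (degree h) h dvd w"
        by blast
      then have "coeff_vec n w \<in> generated_code n g \<inter> herm_dual q n (generated_code n g)"
        by (intro mem[THEN iffD2]) (simp add: Poly_coeff_vec)
      then have "coeff_vec n w = replicate n 0"
        using hcd unfolding is_HCD_def by blast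
      then have "w = 0"
        by (metis Poly_coeff_vec[OF w(2)] Poly_replicate_0)
      with w(1) show False ..
    qed
  next
    assume none: "\<not> (\<exists>w. w \<noteq> 0 \<and> degree w < n \<and> g dvd w \<and> conj_recip (degree h) h dvd w)"
    have "v = replicate n 0" if "v \<in> generated_code n g \<inter> herm_dual q n (generated_code n g)" for v
    proof -
      have v: "length v = n" "g dvd Poly v" "conj_recip (degree h) h dvd Poly v"
        using mem[THEN iffD1, OF that] by simp_all
      then have "Poly v = 0"
        using none degree_Poly_less[OF v(1) n] by blast
      then show ?thesis
        using Poly_eq_iff_same_length[of v "replicate n 0"] v(1) by simp
    qed
    moreover have "replicate n 0 \<in> generated_code n g \<inter> herm_dual q n (generated_code n g)"
      by (rule mem[THEN iffD2]) simp
    ultimately show "is_HCD q n (generated_code n g)"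
      unfolding is_HCD_def by blast
  qed
qed

lemma degree_dagger_poly: "coeff f 0 \<noteq> 0 \<Longrightarrow> degree (dagger f) = degree f"
  by (simp add: dagger_poly_eq_conj_recip degree_conj_recip)

lemma lead_coeff_dagger_poly: "coeff f 0 \<noteq> 0 \<Longrightarrow> lead_coeff (dagger f) = 1"
  by (simp add: degree_dagger_poly) (simp add: dagger_poly_eq_conj_recip coeff_conj_recip
      flip: conjq_mult)

lemma coeff_0_dagger_poly: "coeff (dagger f) 0 = \<sigma> (inverse (coeff f 0)) * \<sigma> (lead_coeff f)"
  by (simp add: dagger_poly_eq_conj_recip coeff_conj_recip)

lemma dagger_dagger_poly:
  assumes "lead_coeff f = 1" "coeff f 0 \<noteq> 0"
  shows "dagger (dagger f) = f"
proof -
  have "coeff (dagger f) 0 = \<sigma> (inverse (coeff f 0))"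
    using assms(1) by (simp add: coeff_0_dagger_poly)
  moreover have "conj_recip (degree f) (dagger f) = smult (inverse (coeff f 0)) f"
    by (simp add: dagger_poly_eq_conj_recip conj_recip_smult conj_recip_conj_recip)
  ultimately show ?thesis
    using assms(2) by (simp add: dagger_poly_eq_conj_recip[of "dagger f"] degree_dagger_poly conjq_inverse)
qed

lemma irreducible_conj_recip:
  assumes f0: "coeff f 0 \<noteq> 0" and irr: "irreducible f"
  shows "irreducible (conj_recip (degree f) f)"
proof (rule irreducibleI)
  let ?F = "conj_recip (degree f) f"
  have "f \<noteq> 0" "\<not> is_unit f"
    using irr by (auto simp: irreducible_def)
  then have "degree f > 0"
    by (simp add: is_unit_iff_degree)
  moreover have F: "degree ?F = degree f"
    using f0 by (rule degree_conj_recip)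
  ultimately show "?F \<noteq> 0"
    by auto
  then show "\<not> is_unit ?F"
    using F \<open>degree f > 0\<close> by (simp add: is_unit_iff_degree)
  fix a b assume ab: "?F = a * b"
  then have "a \<noteq> 0" "b \<noteq> 0" "degree a + degree b = degree f"
    using F \<open>?F \<noteq> 0\<close> by (auto simp: degree_mult_eq)
  have "coeff ?F 0 = \<sigma> (lead_coeff f)"
    by (simp add: coeff_conj_recip)
  then have "coeff a 0 * coeff b 0 = \<sigma> (lead_coeff f)"
    by (simp add: ab coeff_mult)
  then have a0: "coeff a 0 \<noteq> 0" and b0: "coeff b 0 \<noteq> 0"
    using \<open>f \<noteq> 0\<close> by auto
  have "f = conj_recip (degree f) (a * b)"
    by (simp add: conj_recip_conj_recip flip: ab)
  also have "\<dots> = conj_recip (degree a) a * conj_recip (degree b) b"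
    using \<open>degree a + degree b = degree f\<close> by (metis conj_recip_mult order_refl)
  finally have "is_unit (conj_recip (degree a) a) \<or> is_unit (conj_recip (degree b) b)"
    by (rule irreducibleD[OF irr])
  then show "is_unit a \<or> is_unit b"
    using a0 b0 \<open>a \<noteq> 0\<close> \<open>b \<noteq> 0\<close> by (auto simp: is_unit_iff_degree degree_conj_recip)
qed

lemma irreducible_dagger_poly:
  assumes "coeff f 0 \<noteq> 0" "irreducible f"
  shows "irreducible (dagger f)"
proof -
  have "is_unit [:\<sigma> (inverse (coeff f 0)):]"
    using assms(1) by (simp add: is_unit_pCons_iff)
  then have "irreducible ([:\<sigma> (inverse (coeff f 0)):] * conj_recip (degree f) f)"
    using irreducible_conj_recip[OF assms] by (subst irreducible_mult_unit_left)
  then show ?thesis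
    by (simp add: dagger_poly_eq_conj_recip)
qed

lemma conj_recip_dvd_xn_minus_1:
  assumes m: "m > 0" and h: "h dvd xn_minus_1 m"
  shows "conj_recip (degree h) h dvd xn_minus_1 m"
proof -
  obtain k where k: "xn_minus_1 m = h * k"
    using h by (elim dvdE)
  then have "h \<noteq> 0"
    using xn_minus_1_nonzero[OF m] by auto
  have "- xn_minus_1 m = conj_recip m (h * k)"
    using conj_recip_xn_minus_1[OF m] k by simp
  also have "\<dots> = conj_recip (degree h) h * conj_recip (m - degree h) k"
  proof (rule conj_recip_mult_split)
    show "degree (h * k) \<le> m"
      by (metis k degree_xn_minus_1[OF m] order_refl)
  qed fact
  finally show ?thesis
    by (metis dvd_minus_iff dvd_triv_left)
qed

lemma mon_irr_factor_dagger_poly: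
  assumes "m > 0" "mon_irr_factor m f"
  shows "mon_irr_factor m (dagger f)"
proof -
  have f0: "coeff f 0 \<noteq> 0" and f: "f dvd xn_minus_1 m"
    using assms(2) by (simp_all add: mon_irr_factor_def)
  have "dagger f dvd xn_minus_1 m"
    using conj_recip_dvd_xn_minus_1[OF assms(1) f] f0
    by (simp add: dagger_poly_eq_conj_recip smult_dvd_iff)
  then show ?thesis
    using assms f0 lead_coeff_dagger_poly irreducible_dagger_poly coeff_0_of_dvd_xn_minus_1
    by (simp add: mon_irr_factor_def)
qed

lemma multiplicity_conj_recip:
  assumes f0: "coeff f 0 \<noteq> 0"
  shows "field_poly.multiplicity f (conj_recip (degree h) h) =
    field_poly.multiplicity (dagger f) h"
proof -
  define c where "c = \<sigma> (inverse (coeff f 0))"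
  have "c \<noteq> 0" "f \<noteq> 0"
    using f0 by (auto simp: c_def)
  have "f ^ k dvd conj_recip (degree h) h \<longleftrightarrow> dagger f ^ k dvd h" for k
  proof -
    have "coeff (f ^ k) 0 \<noteq> 0"
      using f0 by (simp add: coeff_0_power)
    then have "f ^ k dvd conj_recip (degree h) h \<longleftrightarrow> conj_recip (degree (f ^ k)) (f ^ k) dvd h"
      by (intro conj_recip_dvd_iff) simp
    also have "conj_recip (degree (f ^ k)) (f ^ k) = conj_recip (degree f) f ^ k"
      using \<open>f \<noteq> 0\<close> by (simp add: degree_power_eq conj_recip_power)
    moreover have "dagger f ^ k = smult (c ^ k) (conj_recip (degree f) f ^ k)"
      by (simp add: dagger_poly_eq_conj_recip c_def smult_power)
    ultimately show ?thesis
      using \<open>c \<noteq> 0\<close> by (simp add: smult_dvd_iff)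
  qed
  then show ?thesis
    by (simp add: field_poly.multiplicity_def field_poly_power_eq)
qed

lemma is_HCD_iff_multiplicity:
  assumes n': "n' > 0" "of_nat n' \<noteq> (0 :: 'a)" and e: "e > 0" and n: "n > 0"
    and X: "xn_minus_1 n = (xn_minus_1 n' :: 'a poly) ^ e" and g: "g dvd xn_minus_1 n"
  shows "is_HCD q n (generated_code n g) \<longleftrightarrow> (\<forall>f. mon_irr_factor n' f \<longrightarrow>
    field_poly.multiplicity f g = e \<or> field_poly.multiplicity (dagger f) g = 0)"
proof -
  define h where "h = xn_minus_1 n div g"
  define H where "H = conj_recip (degree h) h"
  have Xgh: "xn_minus_1 n = g * h"
    using g by (simp add: h_def)
  then have "g \<noteq> 0" "h \<noteq> 0" "h dvd xn_minus_1 n"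
    using xn_minus_1_nonzero[OF n] by auto
  have mX: "field_poly.multiplicity r (xn_minus_1 n) = (if mon_irr_factor n' r then e else 0)"
    if "field_poly.prime r" for r :: "'a poly"
    using multiplicity_xn_minus_1_power[OF n' that] X by simp
  have mgh: "field_poly.multiplicity r (xn_minus_1 n) = field_poly.multiplicity r g + field_poly.multiplicity r h"
    if "field_poly.prime r" for r :: "'a poly"
    unfolding Xgh using that \<open>g \<noteq> 0\<close> \<open>h \<noteq> 0\<close>
    by (simp add: field_poly.prime_elem_multiplicity_mult_distrib field_poly.prime_def)
  have prime: "field_poly.prime f" if "mon_irr_factor n' f" for f :: "'a poly"
    using that by (simp add: mon_irr_factor_def field_poly_prime_iff)
  have mH: "field_poly.multiplicity f H = e - field_poly.multiplicity (dagger f) g"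
    if "mon_irr_factor n' f" for f :: "'a poly"
  proof -
    have "mon_irr_factor n' (dagger f)"
      using mon_irr_factor_dagger_poly[OF n'(1) that] .
    then have "field_poly.multiplicity (dagger f) g + field_poly.multiplicity (dagger f) h = e"
      using mX[OF prime] mgh[OF prime] by simp
    then have "field_poly.multiplicity (dagger f) h = e - field_poly.multiplicity (dagger f) g"
      by simp
    then show ?thesis
      using multiplicity_conj_recip[of f h] that by (simp add: H_def mon_irr_factor_def)
  qed
  have "is_HCD q n (generated_code n g) \<longleftrightarrow>
      \<not> (\<exists>w. w \<noteq> 0 \<and> degree w < degree (xn_minus_1 n :: 'a poly) \<and> g dvd w \<and> H dvd w)"
    unfolding degree_xn_minus_1[OF n] using is_HCD_generated_code_iff[OF n g] by (simp add: H_def h_def)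
  also have "\<dots> \<longleftrightarrow> \<not> (\<exists>r. field_poly.prime r \<and>
      field_poly.multiplicity r g < field_poly.multiplicity r (xn_minus_1 n) \<and>
      field_poly.multiplicity r H < field_poly.multiplicity r (xn_minus_1 n))"
    using ex_common_multiple_degree_less_iff[OF xn_minus_1_nonzero[OF n] g]
      conj_recip_dvd_xn_minus_1[OF n \<open>h dvd xn_minus_1 n\<close>] by (simp add: H_def)
  also have "\<dots> \<longleftrightarrow> (\<forall>f. mon_irr_factor n' f \<longrightarrow>
      field_poly.multiplicity f g = e \<or> field_poly.multiplicity (dagger f) g = 0)"
  proof -
    have "field_poly.prime r \<and> field_poly.multiplicity r g < field_poly.multiplicity r (xn_minus_1 n) \<and>
        field_poly.multiplicity r H < field_poly.multiplicity r (xn_minus_1 n) \<longleftrightarrow>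
      mon_irr_factor n' r \<and> field_poly.multiplicity r g \<noteq> e \<and> field_poly.multiplicity (dagger r) g \<noteq> 0"
      for r :: "'a poly"
    proof (cases "mon_irr_factor n' r")
      case True
      then have "field_poly.multiplicity r g \<le> e"
        using mX[OF prime] mgh[OF prime] by (metis le_add1)
      then show ?thesis
        using True mX[OF prime] mH prime by auto
    qed (use mX in auto)
    then show ?thesis
      by blast
  qed
  finally show ?thesis .
qed

lemma card_hermitian_complementary_dual_cyclic_codes:
  assumes n': "n' > 0" "of_nat n' \<noteq> (0 :: 'a)" and e: "e > 0" and n: "n > 0"
    and X: "xn_minus_1 n = (xn_minus_1 n' :: 'a poly) ^ e"
  shows "card {C :: 'a list set. is_cyclic_code n C \<and> is_HCD q n C} =
    2 ^ (card (Omega q n' :: 'a poly set) + card (Lambda q n' :: 'a poly set set))"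
proof -
  define S where "S = {f :: 'a poly. mon_irr_factor n' f}"
  define V where "V = {g. lead_coeff g = 1 \<and> g dvd (xn_minus_1 n :: 'a poly) \<and>
    (\<forall>f\<in>S. field_poly.multiplicity f g = e \<or> field_poly.multiplicity (dagger f) g = 0)}"
  have codes: "{C :: 'a list set. is_cyclic_code n C \<and> is_HCD q n C} = generated_code n ` V"
  proof (intro equalityI subsetI)
    fix C :: "'a list set" assume "C \<in> {C. is_cyclic_code n C \<and> is_HCD q n C}"
    then have C: "is_cyclic_code n C" "is_HCD q n C"
      by simp_all
    obtain g :: "'a poly" where g: "lead_coeff g = 1" "g dvd xn_minus_1 n" "C = generated_code n g"
      using cyclic_code_generator[OF n C(1)] by blast
    then have "g \<in> V"
      using C(2) is_HCD_iff_multiplicity[OF n' e n X g(2)] by (simp add: V_def S_def)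
    then show "C \<in> generated_code n ` V"
      using g(3) by (rule rev_image_eqI)
  next
    fix C :: "'a list set" assume "C \<in> generated_code n ` V"
    then obtain g where g: "g \<in> V" "C = generated_code n g"
      by blast
    then have "g dvd xn_minus_1 n"
      by (simp add: V_def)
    moreover have "is_HCD q n (generated_code n g)"
      using g(1) is_HCD_iff_multiplicity[OF n' e n X \<open>g dvd xn_minus_1 n\<close>] by (simp add: V_def S_def)
    ultimately show "C \<in> {C. is_cyclic_code n C \<and> is_HCD q n C}"
      using cyclic_generated_code[OF n] g(2) by simp
  qed
  have "inj_on (generated_code n) V"
  proof (rule inj_onI)
    fix g g' :: "'a poly" assume "g \<in> V" "g' \<in> V" and eq: "generated_code n g = generated_code n g'"
    then have g: "lead_coeff g = 1" "g dvd xn_minus_1 n" "lead_coeff g' = 1" "g' dvd xn_minus_1 n"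
      by (simp_all add: V_def)
    show "g = g'"
    proof (rule field_poly.associated_eqI)
      show "g' dvd g"
        using generated_code_dvd[OF n g(1,2,4) eq] .
      show "g dvd g'"
        using generated_code_dvd[OF n g(3,4,2) eq[symmetric]] .
    qed (simp_all add: g(1,3))
  qed
  then have card_codes: "card {C :: 'a list set. is_cyclic_code n C \<and> is_HCD q n C} = card V"
    by (simp add: codes card_image)
  have S_prime: "field_poly.prime f" and S_dagger: "dagger f \<in> S"
    and dagger_dagger: "dagger (dagger f) = f" if "f \<in> S" for f
    using that mon_irr_factor_dagger_poly[OF n'(1)] dagger_dagger_poly
    by (simp_all add: S_def mon_irr_factor_def field_poly_prime_iff)
  have mult_X: "field_poly.multiplicity r (xn_minus_1 n) = (if r \<in> S then e else 0)"
    if "field_poly.prime r" for r :: "'a poly"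
    using multiplicity_xn_minus_1_power[OF n' that] X by (simp add: S_def)
  note count_assms = S_prime S_dagger dagger_dagger e xn_minus_1_nonzero[OF n] mult_X
  have "card V = card {T. T \<subseteq> S \<and> (\<forall>f\<in>T. dagger f \<in> T)}"
    unfolding V_def by (rule card_invariant_monic_divisors[OF count_assms])
  also have "\<dots> = 2 ^ (card {f. f \<in> S \<and> f = dagger f} +
      card {{f, dagger f} | f. f \<in> S \<and> dagger f \<in> S \<and> f \<noteq> dagger f})"
    using finite_prime_support[OF count_assms] S_dagger dagger_dagger
    by (rule card_involution_invariant_subsets)
  also have "{f. f \<in> S \<and> f = dagger f} = Omega q n'"
    by (simp add: S_def Omega_def)
  also have "{{f, dagger f} | f. f \<in> S \<and> dagger f \<in> S \<and> f \<noteq> dagger f} = Lambda q n'"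
    by (simp add: S_def Lambda_def)
  finally show ?thesis
    using card_codes by simp
qed

end

lemma power_card_UNIV_eq_self:
  fixes x :: "'a :: {field, finite}"
  shows "x ^ card (UNIV :: 'a set) = x"
proof (cases "x = 0")
  case False
  let ?U = "UNIV - {0 :: 'a}"
  have "(\<Prod>y\<in>?U. x * y) = (\<Prod>y\<in>?U. y)"
    using False by (intro prod.reindex_bij_witness[of _ "\<lambda>y. y / x" "\<lambda>y. x * y"]) auto
  then have "x ^ card ?U * \<Prod>?U = 1 * \<Prod>?U"
    by (simp add: prod.distrib)
  moreover have "\<Prod>?U \<noteq> 0"
    by simp
  ultimately have "x ^ card ?U = 1"
    by (rule mult_right_cancel[THEN iffD1, rotated])
  moreover have "Suc (card ?U) = card (UNIV :: 'a set)"
    by (rule card_Suc_Diff1) simp_all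
  ultimately show ?thesis
    by (metis power_Suc2 mult_1)
qed (simp add: finite_UNIV_card_ge_0)

lemma of_nat_card_UNIV: "of_nat (card (UNIV :: 'a :: {field, finite} set)) = (0 :: 'a)"
proof -
  have "(\<Sum>a\<in>UNIV. a + 1) = (\<Sum>a\<in>(UNIV :: 'a set). a)"
    by (rule sum.reindex_bij_witness[of _ "\<lambda>a. a - 1" "\<lambda>a. a + 1"]) auto
  then show ?thesis
    by (simp add: sum.distrib)
qed

lemma xn_minus_1_mult_CHAR_power:
  assumes "prime CHAR('a :: field)"
  shows "xn_minus_1 (CHAR('a) ^ k * n) = (xn_minus_1 n :: 'a poly) ^ (CHAR('a) ^ k)"
proof -
  let ?m = "CHAR('a) ^ k"
  have dream: "(a + b) ^ ?m = a ^ ?m + b ^ ?m" for a b :: "'a poly"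
    using assms by (intro freshmans_dream') simp_all
  have "?m > 0"
    using assms prime_gt_0_nat by simp
  then have "1 + (-1 :: 'a poly) ^ ?m = 0"
    using dream[of 1 "-1"] by (metis add.right_inverse power_one zero_power)
  then have minus_one: "(-1 :: 'a poly) ^ ?m = -1"
    by (simp add: add_eq_0_iff)
  have "(xn_minus_1 n :: 'a poly) ^ ?m = (monom 1 n + (-1)) ^ ?m"
    by (simp only: diff_conv_add_uminus)
  also have "\<dots> = monom 1 (n * ?m) + (-1)"
    by (simp only: dream monom_power power_one minus_one)
  also have "\<dots> = monom 1 (?m * n) - 1"
    by (simp only: mult.commute[of n] diff_conv_add_uminus)
  finally show ?thesis
    by (rule sym)
qed

theorem corollary3p4:
  fixes p q m \<nu> n' :: nat
  assumes "prime p" and "m \<ge> 1" and "q = p ^ m"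
    and "card (UNIV :: ('a::{field,finite}) set) = q ^ 2"
    and "n' > 0" and "\<not> p dvd n'"
  shows "card {C :: 'a list set. is_cyclic_code (p ^ \<nu> * n') C \<and> is_HCD q (p ^ \<nu> * n') C}
         = 2 ^ (card (Omega q n' :: 'a poly set) + card (Lambda q n' :: 'a poly set set))"
proof -
  have char_prime: "prime CHAR('a)"
    by (rule prime_CHAR_semidom[OF finite_imp_CHAR_pos]) simp
  have "CHAR('a) dvd card (UNIV :: 'a set)"
    using of_nat_card_UNIV[where ?'a = 'a] by (simp only: of_nat_eq_0_iff_char_dvd)
  then have "CHAR('a) dvd p ^ (m * 2)"
    using assms(3,4) by (simp only: power_mult)
  then have char: "CHAR('a) = p"
    using prime_dvd_power[OF char_prime] primes_dvd_imp_eq[OF char_prime assms(1)] by blast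
  have frob: "frobenius_involution TYPE('a) q"
  proof
    show "(a + b) ^ q = a ^ q + b ^ q" for a b :: 'a
      using freshmans_dream'[OF char_prime, of q m a b] assms(3) char by simp
    show "(a ^ q) ^ q = a" for a :: 'a
      using power_card_UNIV_eq_self[of a] assms(4) by (simp only: power2_eq_square power_mult)
  qed
  show ?thesis
  proof (rule frobenius_involution.card_hermitian_complementary_dual_cyclic_codes[OF frob])
    show "of_nat n' \<noteq> (0 :: 'a)"
      using assms(6) char by (simp add: of_nat_eq_0_iff_char_dvd)
    show "xn_minus_1 (p ^ \<nu> * n') = (xn_minus_1 n' :: 'a poly) ^ p ^ \<nu>"
      using xn_minus_1_mult_CHAR_power[OF char_prime, of \<nu> n'] by (simp only: char)
    show "n' > 0" "p ^ \<nu> > 0" "p ^ \<nu> * n' > 0"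
      using assms(1,5) prime_gt_0_nat by simp_all
  qed
qed

end
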